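(* Let $\frac n5\le k<\frac n2$ and $\delta\in(0,1)$. There is a universal constant $C>0$ such that if $n$ is sufficiently large depending only on $\delta$, then $$\sup_{\theta\in\mathbb{R},\ \eta\in\mathbb{R}^n,\ \sigma>0,\ |\mathcal O|\le k}P_{\theta,\eta,\sigma}\left\{\big|\operatorname{median}(X_1,\dots,X_n)-\theta\big|>C\sigma\sqrt{\log\Big(\frac{en}{n-2k}\Big)}\right\}\le\delta .$$
   Context: Huber contamination model (deterministic version): $\{1,\dots,n\}$ is partitioned into a fixed inlier set $\mathcal I$ and a fixed outlier set $\mathcal O$ with $|\mathcal O|\le k$; the $X_j$ are independent with $X_j\sim N(\theta,\sigma^2)$ for $j\in\mathcal I$ and $X_j=\eta_j$ (a point mass at a fixed arbitrary value $\eta_j\in\mathbb{R}$) for $j\in\mathcal O$. $P_{\theta,\eta,\sigma}$ is the resulting joint law. $\operatorname{median}$ denotes the sample median (for even $n$, any point between the two middle order statistics). *)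

theory Defs
  imports "HOL-Probability.Probability"
begin

text \<open>For odd n this is
  exactly the middle order statistic; for even n it is any point of the closed interval
  between the two middle order statistics.\<close>
definition is_sample_median :: "nat \<Rightarrow> (nat \<Rightarrow> real) \<Rightarrow> real \<Rightarrow> bool" where
  "is_sample_median n x m \<longleftrightarrow>
     2 * card {i \<in> {..<n}. x i < m} \<le> n \<and> 2 * card {i \<in> {..<n}. m < x i} \<le> n"

definition huber_model ::
  "nat \<Rightarrow> nat set \<Rightarrow> real \<Rightarrow> (nat \<Rightarrow> real) \<Rightarrow> real \<Rightarrow> (nat \<Rightarrow> real) measure" where
  "huber_model n Out \<theta> \<eta> \<sigma> =
     PiM {..<n} (\<lambda>j. if j \<in> Out then return borel (\<eta> j)
                     else density lborel (normal_density \<theta> \<sigma>))"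

end

theory Submission
  imports Defs
begin

text \<open>Write \<open>r = n - 2k\<close> and \<open>T = 4\<sigma>\<surd>L\<close> with \<open>L = ln (e n / r)\<close>. If a sample median exceeds
  \<open>\<theta> + T\<close>, at least \<open>n/2\<close> points do, hence at least \<open>r/2\<close> inliers. Each inlier exceeds \<open>\<theta> + T\<close>
  with probability at most \<open>exp (-T\<^sup>2/2\<sigma>\<^sup>2) = exp (-8L)\<close>, and a Chernoff bound for the number of
  such inliers (with exponent \<open>4L\<close>) shows that \<open>r/2\<close> of them occur with probability at most
  \<open>1/(2n)\<close>; symmetrically below \<open>\<theta> - T\<close>. So the median deviates by more than \<open>T\<close> with
  probability at most \<open>1/n \<le> \<delta>\<close> once \<open>n \<ge> 1/\<delta>\<close>.\<close>

lemma normal_density_le_shifted: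
  fixes s y :: real
  assumes "0 < \<sigma>" "s\<^sup>2 \<le> s * (y - \<theta>)"
  shows "normal_density \<theta> \<sigma> y \<le> exp (- s\<^sup>2 / (2 * \<sigma>\<^sup>2)) * normal_density (\<theta> + s) \<sigma> y"
proof -
  have "(y - \<theta>)\<^sup>2 = (y - (\<theta> + s))\<^sup>2 + 2 * (s * (y - \<theta>)) - s\<^sup>2"
    by (simp add: power2_eq_square algebra_simps)
  then have "- (y - \<theta>)\<^sup>2 / (2 * \<sigma>\<^sup>2) \<le> - s\<^sup>2 / (2 * \<sigma>\<^sup>2) + - (y - (\<theta> + s))\<^sup>2 / (2 * \<sigma>\<^sup>2)"
    using assms by (simp add: divide_simps)
  then show ?thesis
    unfolding normal_density_def by (simp add: exp_add[symmetric] divide_right_mono mult.assoc)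
qed

lemma emeasure_normal_le_exp:
  fixes s :: real
  assumes "0 < \<sigma>" "A \<in> sets borel" "\<And>y. y \<in> A \<Longrightarrow> s\<^sup>2 \<le> s * (y - \<theta>)"
  shows "emeasure (density lborel (normal_density \<theta> \<sigma>)) A \<le> ennreal (exp (- s\<^sup>2 / (2 * \<sigma>\<^sup>2)))"
proof -
  let ?c = "exp (- s\<^sup>2 / (2 * \<sigma>\<^sup>2))"
  have "emeasure (density lborel (normal_density \<theta> \<sigma>)) A
      = (\<integral>\<^sup>+ y. ennreal (normal_density \<theta> \<sigma> y) * indicator A y \<partial>lborel)"
    using assms(2) by (simp add: emeasure_density)
  also have "\<dots> \<le> (\<integral>\<^sup>+ y. ennreal ?c * ennreal (normal_density (\<theta> + s) \<sigma> y) \<partial>lborel)"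
    using normal_density_le_shifted[OF assms(1) assms(3)]
    by (intro nn_integral_mono) (auto simp: indicator_def ennreal_mult[symmetric])
  also have "\<dots> = ennreal ?c * (\<integral>\<^sup>+ y. ennreal (normal_density (\<theta> + s) \<sigma> y) \<partial>lborel)"
    by (rule nn_integral_cmult) auto
  also have "(\<integral>\<^sup>+ y. ennreal (normal_density (\<theta> + s) \<sigma> y) \<partial>lborel) = 1"
    using assms(1) by (subst nn_integral_eq_integral) (auto intro: integrable_normal_density)
  finally show ?thesis by simp
qed

lemma emeasure_normal_greaterThan_le:
  assumes "0 < \<sigma>" "0 \<le> T"
  shows "emeasure (density lborel (normal_density \<theta> \<sigma>)) {\<theta> + T<..} \<le> ennreal (exp (- T\<^sup>2 / (2 * \<sigma>\<^sup>2)))"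
proof (rule emeasure_normal_le_exp[OF assms(1)])
  show "T\<^sup>2 \<le> T * (y - \<theta>)" if "y \<in> {\<theta> + T<..}" for y
    using that assms(2) mult_left_mono[of T "y - \<theta>" T] by (simp add: power2_eq_square)
qed simp

lemma emeasure_normal_lessThan_le:
  assumes "0 < \<sigma>" "0 \<le> T"
  shows "emeasure (density lborel (normal_density \<theta> \<sigma>)) {..<\<theta> - T} \<le> ennreal (exp (- T\<^sup>2 / (2 * \<sigma>\<^sup>2)))"
proof -
  have "(- T)\<^sup>2 \<le> - T * (y - \<theta>)" if "y < \<theta> - T" for y
    using that assms(2) mult_left_mono[of T "\<theta> - y" T] by (simp add: power2_eq_square algebra_simps)
  then show ?thesis
    using emeasure_normal_le_exp[OF assms(1), of "{..<\<theta> - T}" "- T" \<theta>] by simp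
qed

lemma is_sample_median_uminus:
  "is_sample_median n (\<lambda>i. - x i) (- m) \<longleftrightarrow> is_sample_median n x m"
  unfolding is_sample_median_def by auto

lemma sample_median_point_above:
  assumes "is_sample_median n x m" "0 < n"
  obtains i where "i < n" "is_sample_median n x (x i)" "m \<le> x i"
proof -
  let ?V = "{i \<in> {..<n}. m \<le> x i}"
  have "?V \<noteq> {}"
  proof
    assume "?V = {}"
    then have "{i \<in> {..<n}. x i < m} = {..<n}"
      by (auto simp: not_le)
    then have "2 * n \<le> n"
      using assms(1) unfolding is_sample_median_def by simp
    then show False
      using assms(2) by simp
  qed
  then have "Min (x ` ?V) \<in> x ` ?V"
    by (intro Min_in) simp_all
  then obtain i where i: "Min (x ` ?V) = x i" "i \<in> ?V"
    by (rule imageE)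
  have min: "x i \<le> x j" if "j < n" "m \<le> x j" for j
    unfolding i(1)[symmetric] using that by (intro Min_le) simp_all
  have "{j \<in> {..<n}. x j < x i} = {j \<in> {..<n}. x j < m}"
    using i(2) min by (fastforce simp: not_le intro: less_le_trans)
  moreover have "card {j \<in> {..<n}. x i < x j} \<le> card {j \<in> {..<n}. m < x j}"
    using i(2) by (intro card_mono) auto
  ultimately have "is_sample_median n x (x i)"
    using assms(1) unfolding is_sample_median_def by simp
  with i(2) show ?thesis
    by (intro that[of i]) simp_all
qed

lemma sample_median_point_below:
  assumes "is_sample_median n x m" "0 < n"
  obtains i where "i < n" "is_sample_median n x (x i)" "x i \<le> m"
  using sample_median_point_above[of n "\<lambda>i. - x i" "- m"] assms
  by (auto simp: is_sample_median_uminus)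

lemma card_inliers_above_sample_median:
  assumes "is_sample_median n x m" "a < m" "Out \<subseteq> {..<n}"
  shows "real n - 2 * real (card Out) \<le> 2 * real (card {i \<in> {..<n} - Out. a < x i})"
proof -
  let ?I = "{..<n} - Out"
  have "card ?I = n - card Out"
    using assms(3) by (simp add: card_Diff_subset finite_subset)
  moreover have "?I = {i \<in> ?I. a < x i} \<union> {i \<in> ?I. x i \<le> a}"
    by auto
  then have "card ?I \<le> card {i \<in> ?I. a < x i} + card {i \<in> ?I. x i \<le> a}"
    by (metis card_Un_le)
  moreover have "card {i \<in> ?I. x i \<le> a} \<le> card {i \<in> {..<n}. x i < m}"
    using assms(2) by (intro card_mono) auto
  moreover have "card Out \<le> n"
    using assms(3) by (metis card_lessThan card_mono finite_lessThan)
  ultimately show ?thesis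
    using assms(1) unfolding is_sample_median_def by linarith
qed

lemma card_inliers_below_sample_median:
  assumes "is_sample_median n x m" "m < a" "Out \<subseteq> {..<n}"
  shows "real n - 2 * real (card Out) \<le> 2 * real (card {i \<in> {..<n} - Out. x i < a})"
  using card_inliers_above_sample_median[of n "\<lambda>i. - x i" "- m" "- a" Out] assms
  by (simp add: is_sample_median_uminus)

lemma sample_median_far_inliers_beyond:
  assumes "is_sample_median n x m" "T < \<bar>m - \<theta>\<bar>" "Out \<subseteq> {..<n}"
  shows "real n - 2 * real (card Out) \<le> 2 * real (card {i \<in> {..<n} - Out. x i \<in> {\<theta> + T<..}}) \<or>
         real n - 2 * real (card Out) \<le> 2 * real (card {i \<in> {..<n} - Out. x i \<in> {..<\<theta> - T}})"
proof (cases "\<theta> < m")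
  case True
  then show ?thesis
    using card_inliers_above_sample_median[OF assms(1) _ assms(3), of "\<theta> + T"] assms(2) by simp
next
  case False
  then show ?thesis
    using card_inliers_below_sample_median[OF assms(1) _ assms(3), of "\<theta> - T"] assms(2) by simp
qed

lemma measurable_card_components_in:
  assumes "finite J" "J \<subseteq> I" "\<And>i. i \<in> J \<Longrightarrow> B \<in> sets (M i)"
  shows "(\<lambda>x. real (card {i \<in> J. x i \<in> B})) \<in> borel_measurable (PiM I M)"
proof -
  have "(\<lambda>x. (\<Sum>i\<in>J. indicator B (x i) :: real)) \<in> borel_measurable (PiM I M)"
  proof (intro borel_measurable_sum)
    fix i assume "i \<in> J"
    then show "(\<lambda>x. indicator B (x i) :: real) \<in> borel_measurable (PiM I M)"
      using assms(2,3) by (intro measurable_compose[OF measurable_component_singleton]) auto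
  qed
  moreover have "(\<Sum>i\<in>J. indicator B (x i) :: real) = real (card {i \<in> J. x i \<in> B})" for x
    using assms(1) by (simp add: indicator_def Collect_conj_eq)
  ultimately show ?thesis
    by simp
qed

lemma sets_sample_median_deviation:
  fixes M :: "nat \<Rightarrow> real measure"
  assumes "0 < n" and sets_M: "\<And>i. sets (M i) = sets borel"
  shows "{x \<in> space (PiM {..<n} M). \<exists>m. is_sample_median n x m \<and> T < \<bar>m - \<theta>\<bar>}
           \<in> sets (PiM {..<n} M)"
proof -
  have component[measurable]: "(\<lambda>x. x j) \<in> borel_measurable (PiM {..<n} M)" if "j < n" for j
    using measurable_component_singleton[of j "{..<n}" M] that
    by (simp add: measurable_cong_sets[OF refl sets_M])
  have median_pred: "Measurable.pred (PiM {..<n} M) (\<lambda>x. is_sample_median n x (x i))"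
    if "i < n" for i
  proof -
    have half_le: "2 * real c \<le> real n \<longleftrightarrow> 2 * c \<le> n" for c
      by linarith
    have "is_sample_median n x (x i) \<longleftrightarrow>
        2 * (\<Sum>j<n. of_bool (x j < x i) :: real) \<le> n \<and> 2 * (\<Sum>j<n. of_bool (x i < x j) :: real) \<le> n"
      for x
      unfolding is_sample_median_def by (simp add: Collect_conj_eq lessThan_def half_le)
    moreover have "Measurable.pred (PiM {..<n} M) (\<lambda>x.
        2 * (\<Sum>j<n. of_bool (x j < x i) :: real) \<le> n \<and> 2 * (\<Sum>j<n. of_bool (x i < x j) :: real) \<le> n)"
      using that by measurable
    ultimately show ?thesis
      by simp
  qed
  \<comment> \<open>A sample median need not be a data point, but some data point is a sample median
    lying on the same side of \<open>\<theta>\<close>, farther away.\<close>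
  have "{x \<in> space (PiM {..<n} M). \<exists>m. is_sample_median n x m \<and> T < \<bar>m - \<theta>\<bar>}
      = (\<Union>i<n. {x \<in> space (PiM {..<n} M). is_sample_median n x (x i) \<and> T < \<bar>x i - \<theta>\<bar>})"
  proof (intro equalityI subsetI)
    fix x assume "x \<in> {x \<in> space (PiM {..<n} M). \<exists>m. is_sample_median n x m \<and> T < \<bar>m - \<theta>\<bar>}"
    then obtain m where x: "x \<in> space (PiM {..<n} M)" and m: "is_sample_median n x m" "T < \<bar>m - \<theta>\<bar>"
      by blast
    consider "\<theta> < m" | "m \<le> \<theta>" by linarith
    then obtain i where "i < n" "is_sample_median n x (x i)" "T < \<bar>x i - \<theta>\<bar>"
    proof cases
      case 1
      obtain i where "i < n" "is_sample_median n x (x i)" "m \<le> x i"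
        using sample_median_point_above[OF m(1) \<open>0 < n\<close>] .
      with 1 m(2) show ?thesis
        by (intro that[of i]) auto
    next
      case 2
      obtain i where "i < n" "is_sample_median n x (x i)" "x i \<le> m"
        using sample_median_point_below[OF m(1) \<open>0 < n\<close>] .
      with 2 m(2) show ?thesis
        by (intro that[of i]) auto
    qed
    with x show "x \<in> (\<Union>i<n. {x \<in> space (PiM {..<n} M). is_sample_median n x (x i) \<and> T < \<bar>x i - \<theta>\<bar>})"
      by blast
  next
    fix x assume "x \<in> (\<Union>i<n. {x \<in> space (PiM {..<n} M). is_sample_median n x (x i) \<and> T < \<bar>x i - \<theta>\<bar>})"
    then show "x \<in> {x \<in> space (PiM {..<n} M). \<exists>m. is_sample_median n x m \<and> T < \<bar>m - \<theta>\<bar>}"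
      by blast
  qed
  also have "\<dots> \<in> sets (PiM {..<n} M)"
    using median_pred by measurable
  finally show ?thesis .
qed

lemma (in product_prob_space) emeasure_card_components_in_ge:
  assumes "finite I" "J \<subseteq> I"
    and B: "\<And>i. i \<in> J \<Longrightarrow> B \<in> sets (M i)"
    and q: "\<And>i. i \<in> J \<Longrightarrow> emeasure (M i) B \<le> ennreal q"
    and "0 \<le> q" "0 \<le> l"
  shows "emeasure (PiM I M) {x \<in> space (PiM I M). t \<le> real (card {i \<in> J. x i \<in> B})}
           \<le> ennreal (exp (- l * t + real (card I) * exp l * q))"
proof -
  define A where "A = {x \<in> space (PiM I M). t \<le> real (card {i \<in> J. x i \<in> B})}"
  \<comment> \<open>Markov's inequality for \<open>exp (l * count)\<close>, which factorises over the coordinates.\<close>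
  define g where "g i y = exp (l * of_bool (i \<in> J \<and> y \<in> B))" for i y
  have "finite J"
    using assms(1,2) finite_subset by blast
  have B_ind[measurable]: "indicator B \<in> borel_measurable (M i)" if "i \<in> J" for i
    using B[OF that] by simp
  have g_meas: "(\<lambda>y. ennreal (g i y)) \<in> borel_measurable (M i)" if "i \<in> I" for i
  proof (cases "i \<in> J")
    case True
    then have "g i = (\<lambda>y. exp (l * indicator B y))"
      by (auto simp: g_def indicator_def)
    with True show ?thesis
      by simp
  qed (simp add: g_def)
  have prod_g: "(\<Prod>i\<in>I. g i (x i)) = exp (l * real (card {i \<in> J. x i \<in> B}))" for x
  proof -
    have "I \<inter> {i \<in> J. x i \<in> B} = {i \<in> J. x i \<in> B}"
      using assms(2) by blast
    then have sum_eq: "(\<Sum>i\<in>I. l * of_bool (i \<in> J \<and> x i \<in> B)) = l * real (card {i \<in> J. x i \<in> B})"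
      using assms(1) by (simp add: sum_distrib_left[symmetric] mult.commute)
    show ?thesis
      unfolding g_def sum_eq[symmetric] by (simp only: exp_sum[OF assms(1)])
  qed
  have int_g: "(\<integral>\<^sup>+ y. ennreal (g i y) \<partial>M i) \<le> ennreal (1 + exp l * q)" for i
  proof (cases "i \<in> J")
    case True
    have "(\<integral>\<^sup>+ y. ennreal (g i y) \<partial>M i) \<le> (\<integral>\<^sup>+ y. 1 + ennreal (exp l) * indicator B y \<partial>M i)"
      using True \<open>0 \<le> l\<close> by (intro nn_integral_mono) (auto simp: g_def indicator_def)
    also have "\<dots> = 1 + ennreal (exp l) * emeasure (M i) B"
      using B[OF True] by (simp add: nn_integral_add nn_integral_cmult_indicator M.emeasure_space_1)
    also have "\<dots> \<le> 1 + ennreal (exp l) * ennreal q"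
      using q[OF True] by (intro add_left_mono mult_left_mono) auto
    also have "\<dots> = ennreal (1 + exp l * q)"
      using \<open>0 \<le> q\<close> by (simp add: ennreal_mult ennreal_plus)
    finally show ?thesis .
  qed (use \<open>0 \<le> q\<close> in \<open>simp add: g_def M.emeasure_space_1\<close>)
  have "A \<in> sets (PiM I M)"
    unfolding A_def using measurable_card_components_in[OF \<open>finite J\<close> assms(2) B] by measurable
  then have "emeasure (PiM I M) A = (\<integral>\<^sup>+ x. indicator A x \<partial>PiM I M)"
    by simp
  also have "\<dots> \<le> (\<integral>\<^sup>+ x. ennreal (exp (- l * t)) * (\<Prod>i\<in>I. ennreal (g i (x i))) \<partial>PiM I M)"
  proof (intro nn_integral_mono)
    fix x
    have "indicator A x \<le> exp (- l * t) * exp (l * real (card {i \<in> J. x i \<in> B}))"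
      using \<open>0 \<le> l\<close> by (auto simp: A_def indicator_def exp_add[symmetric] mult_left_mono)
    moreover have "(\<Prod>i\<in>I. ennreal (g i (x i))) = ennreal (exp (l * real (card {i \<in> J. x i \<in> B})))"
      by (subst prod_ennreal) (simp_all add: g_def prod_g[unfolded g_def])
    ultimately show "indicator A x \<le> ennreal (exp (- l * t)) * (\<Prod>i\<in>I. ennreal (g i (x i)))"
      by (simp add: ennreal_indicator[symmetric] ennreal_mult[symmetric] ennreal_leI del: ennreal_mult)
  qed
  also have "\<dots> = ennreal (exp (- l * t)) * (\<Prod>i\<in>I. \<integral>\<^sup>+ y. ennreal (g i y) \<partial>M i)"
    using g_meas by (simp add: nn_integral_cmult product_nn_integral_prod[OF assms(1) g_meas])
  also have "\<dots> \<le> ennreal (exp (- l * t)) * ennreal ((1 + exp l * q) ^ card I)"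
  proof (intro mult_left_mono)
    have "(\<Prod>i\<in>I. \<integral>\<^sup>+ y. ennreal (g i y) \<partial>M i) \<le> (\<Prod>i\<in>I. ennreal (1 + exp l * q))"
      by (rule prod_mono_ennreal) (rule int_g)
    then show "(\<Prod>i\<in>I. \<integral>\<^sup>+ y. ennreal (g i y) \<partial>M i) \<le> ennreal ((1 + exp l * q) ^ card I)"
      using \<open>0 \<le> q\<close> by (simp add: ennreal_power[symmetric] ennreal_plus[symmetric] del: ennreal_plus)
  qed simp
  also have "\<dots> \<le> ennreal (exp (- l * t + real (card I) * exp l * q))"
  proof -
    have "(1 + exp l * q) ^ card I \<le> exp (exp l * q) ^ card I"
      using \<open>0 \<le> q\<close> by (intro power_mono) (simp_all add: add.commute)
    then have "exp (- l * t) * (1 + exp l * q) ^ card I \<le> exp (- l * t) * exp (real (card I) * exp l * q)"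
      by (simp add: exp_of_nat_mult[symmetric] mult.assoc)
    then have "exp (- l * t) * (1 + exp l * q) ^ card I \<le> exp (- l * t + real (card I) * exp l * q)"
      by (simp only: exp_add)
    then show ?thesis
      using \<open>0 \<le> q\<close> by (simp add: ennreal_mult[symmetric] ennreal_leI del: ennreal_mult)
  qed
  finally show ?thesis
    unfolding A_def .
qed

lemma one_le_ln_ratio:
  fixes n r :: real
  assumes "1 \<le> r" "r \<le> n"
  shows "1 \<le> ln (exp 1 * n / r)"
proof -
  have "exp 1 \<le> exp 1 * n / r"
    using assms by (simp add: field_simps)
  then show ?thesis
    using assms by (simp add: ln_ge_iff)
qed

lemma one_add_ln_le_mult_ln_ratio:
  fixes n r :: real
  assumes "1 \<le> r" "r \<le> n"
  shows "1 + ln n \<le> r * ln (exp 1 * n / r)"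
proof -
  have ratio: "ln (exp 1 * n / r) = 1 + ln n - ln r"
    using assms by (simp add: ln_div ln_mult)
  have "ln r \<le> r - 1" "ln r \<le> ln n"
    using assms by (simp_all add: ln_le_minus_one)
  moreover have "(r - 1) * (1 + ln r) \<le> (r - 1) * (1 + ln n)"
    using assms \<open>ln r \<le> ln n\<close> by (intro mult_left_mono) auto
  then show ?thesis
    unfolding ratio using \<open>ln r \<le> r - 1\<close> by (simp add: algebra_simps)
qed

lemma exp_chernoff_exponent_le:
  fixes n r :: real
  assumes "1 \<le> r" "r \<le> n"
  defines "L \<equiv> ln (exp 1 * n / r)"
  shows "exp (- 2 * L * r + n * exp (- 4 * L)) \<le> 1 / (2 * n)"
proof -
  have "1 \<le> L"
    unfolding L_def using assms(1,2) by (rule one_le_ln_ratio)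
  have "n * exp (- 4 * L) \<le> n * exp (- L)"
    using \<open>1 \<le> L\<close> \<open>r \<le> n\<close> \<open>1 \<le> r\<close> by (intro mult_left_mono) simp_all
  also have "\<dots> = r / exp 1"
    using assms by (simp add: L_def exp_minus)
  also have "\<dots> \<le> r"
    using \<open>1 \<le> r\<close> by (simp add: divide_le_eq)
  also have "\<dots> \<le> r * L"
    using \<open>1 \<le> r\<close> \<open>1 \<le> L\<close> by simp
  finally have "n * exp (- 4 * L) \<le> r * L" .
  moreover have "1 + ln n \<le> r * L"
    unfolding L_def using assms(1,2) by (rule one_add_ln_le_mult_ln_ratio)
  ultimately have "- 2 * L * r + n * exp (- 4 * L) \<le> - (1 + ln n)"
    by (simp add: algebra_simps)
  then have "exp (- 2 * L * r + n * exp (- 4 * L)) \<le> exp (- (1 + ln n))"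
    by simp
  also have "\<dots> = 1 / (exp 1 * n)"
    using assms by (simp add: exp_minus exp_add field_simps del: minus_add_distrib)
  also have "\<dots> \<le> 1 / (2 * n)"
    using assms exp_ge_add_one_self[of 1] by (intro divide_left_mono mult_right_mono) auto
  finally show ?thesis .
qed

lemma prob_space_huber_factor:
  "0 < \<sigma> \<Longrightarrow> prob_space (if j \<in> Out then return borel (\<eta> j) else density lborel (normal_density \<theta> \<sigma>))"
  by (auto intro: prob_space_return prob_space_normal_density)

lemma sets_huber_model_many_inliers_in:
  assumes "B \<in> sets borel"
  shows "{x \<in> space (huber_model n Out \<theta> \<eta> \<sigma>). t \<le> real (card {i \<in> {..<n} - Out. x i \<in> B})}
           \<in> sets (huber_model n Out \<theta> \<eta> \<sigma>)"
proof -
  have "(\<lambda>x. real (card {i \<in> {..<n} - Out. x i \<in> B})) \<in> borel_measurable (huber_model n Out \<theta> \<eta> \<sigma>)"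
    unfolding huber_model_def using assms by (intro measurable_card_components_in) simp_all
  then show ?thesis
    by measurable
qed

lemma emeasure_huber_model_many_inliers_in_le:
  fixes r :: real
  assumes "0 < \<sigma>" "1 \<le> r" "r \<le> n" "B \<in> sets borel"
    and "emeasure (density lborel (normal_density \<theta> \<sigma>)) B \<le> ennreal (exp (- 8 * ln (exp 1 * n / r)))"
  shows "emeasure (huber_model n Out \<theta> \<eta> \<sigma>)
      {x \<in> space (huber_model n Out \<theta> \<eta> \<sigma>). r / 2 \<le> real (card {i \<in> {..<n} - Out. x i \<in> B})}
      \<le> ennreal (1 / (2 * real n))"
proof -
  define L where "L = ln (exp 1 * n / r)"
  interpret product_prob_space
    "\<lambda>j. if j \<in> Out then return borel (\<eta> j) else density lborel (normal_density \<theta> \<sigma>)" "{..<n}"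
    using product_prob_spaceI[OF prob_space_huber_factor[OF assms(1)]] by (simp add: product_prob_space_def)
  have "1 \<le> L"
    unfolding L_def using assms(2,3) by (rule one_le_ln_ratio)
  have "emeasure (huber_model n Out \<theta> \<eta> \<sigma>)
      {x \<in> space (huber_model n Out \<theta> \<eta> \<sigma>). r / 2 \<le> real (card {i \<in> {..<n} - Out. x i \<in> B})}
      \<le> ennreal (exp (- (4 * L) * (r / 2) + real n * exp (4 * L) * exp (- 8 * L)))"
    unfolding huber_model_def
    using emeasure_card_components_in_ge[of "{..<n} - Out" B "exp (- 8 * L)" "4 * L" "r / 2"]
      assms(4,5) \<open>1 \<le> L\<close>
    by (simp add: L_def)
  also have "- (4 * L) * (r / 2) + real n * exp (4 * L) * exp (- 8 * L) = - 2 * L * r + n * exp (- 4 * L)"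
    by (simp add: mult.assoc exp_add[symmetric])
  also have "exp (- 2 * L * r + n * exp (- 4 * L)) \<le> 1 / (2 * real n)"
    unfolding L_def using assms(2,3) by (rule exp_chernoff_exponent_le)
  finally show ?thesis
    by (simp add: ennreal_leI)
qed

lemma huber_model_median_deviation_le:
  fixes \<theta> \<sigma> :: real and \<eta> :: "nat \<Rightarrow> real"
  assumes "0 < \<sigma>" "Out \<subseteq> {..<n}" "card Out \<le> k" "2 * k < n"
  defines "M \<equiv> huber_model n Out \<theta> \<eta> \<sigma>"
  defines "E \<equiv> {x \<in> space M. \<exists>m. is_sample_median n x m \<and>
             \<bar>m - \<theta>\<bar> > 4 * \<sigma> * sqrt (ln (exp 1 * real n / (real n - 2 * real k)))}"
  shows "E \<in> sets M \<and> measure M E \<le> 1 / n"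
proof -
  define r where "r = real n - 2 * real k"
  define L where "L = ln (exp 1 * n / r)"
  define T where "T = 4 * \<sigma> * sqrt L"
  define Above where "Above = {x \<in> space M. r / 2 \<le> real (card {i \<in> {..<n} - Out. x i \<in> {\<theta> + T<..}})}"
  define Below where "Below = {x \<in> space M. r / 2 \<le> real (card {i \<in> {..<n} - Out. x i \<in> {..<\<theta> - T}})}"
  interpret prob_space M
    unfolding M_def huber_model_def
    using prob_space_huber_factor[OF assms(1)] by (rule prob_space_PiM)
  have "1 \<le> r" "r \<le> n" "0 < n"
    using assms(4) by (auto simp: r_def)
  then have "1 \<le> L"
    unfolding L_def by (intro one_le_ln_ratio)
  then have "0 \<le> T" and T_sq: "T\<^sup>2 / (2 * \<sigma>\<^sup>2) = 8 * L"
    using assms(1) by (simp_all add: T_def power_mult_distrib)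
  have "emeasure M Above \<le> ennreal (1 / (2 * real n))"
    unfolding M_def Above_def
    by (rule emeasure_huber_model_many_inliers_in_le)
      (use assms(1) \<open>1 \<le> r\<close> \<open>r \<le> n\<close> emeasure_normal_greaterThan_le[OF assms(1) \<open>0 \<le> T\<close>, of \<theta>]
        in \<open>simp_all add: T_sq L_def\<close>)
  have "emeasure M Below \<le> ennreal (1 / (2 * real n))"
    unfolding M_def Below_def
    by (rule emeasure_huber_model_many_inliers_in_le)
      (use assms(1) \<open>1 \<le> r\<close> \<open>r \<le> n\<close> emeasure_normal_lessThan_le[OF assms(1) \<open>0 \<le> T\<close>, of \<theta>]
        in \<open>simp_all add: T_sq L_def\<close>)
  have E_eq: "E = {x \<in> space M. \<exists>m. is_sample_median n x m \<and> T < \<bar>m - \<theta>\<bar>}"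
    by (simp add: E_def T_def L_def r_def)
  have r_le: "r \<le> real n - 2 * real (card Out)"
    using assms(3) by (simp add: r_def)
  have "E \<subseteq> Above \<union> Below"
  proof
    fix x assume "x \<in> E"
    then obtain m where "x \<in> space M" "is_sample_median n x m" "T < \<bar>m - \<theta>\<bar>"
      unfolding E_eq by blast
    with sample_median_far_inliers_beyond[OF _ _ assms(2)] r_le
    show "x \<in> Above \<union> Below"
      unfolding Above_def Below_def by force
  qed
  have "E \<in> sets M"
    unfolding E_eq M_def huber_model_def using \<open>0 < n\<close>
    by (intro sets_sample_median_deviation) simp_all
  have "Above \<in> sets M" "Below \<in> sets M"
    unfolding Above_def Below_def M_def by (rule sets_huber_model_many_inliers_in, simp)+
  have "measure M E \<le> measure M (Above \<union> Below)"
    using \<open>E \<subseteq> Above \<union> Below\<close> \<open>Above \<in> sets M\<close> \<open>Below \<in> sets M\<close>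
    by (intro finite_measure_mono) simp_all
  also have "\<dots> \<le> measure M Above + measure M Below"
    using \<open>Above \<in> sets M\<close> \<open>Below \<in> sets M\<close> by (rule measure_Un_le)
  also have "\<dots> \<le> 1 / n"
    using \<open>emeasure M Above \<le> _\<close> \<open>emeasure M Below \<le> _\<close> by (simp add: emeasure_eq_measure)
  finally show ?thesis
    using \<open>E \<in> sets M\<close> by simp
qed

theorem mainTheorem19:
  shows "\<exists>C::real > 0. \<forall>\<delta>::real. 0 < \<delta> \<and> \<delta> < 1 \<longrightarrow>
    (\<exists>N::nat. \<forall>n k::nat. N \<le> n \<and> real n / 5 \<le> real k \<and> 2 * k < n \<longrightarrow>
      (\<forall>(\<theta>::real) (\<eta>::nat \<Rightarrow> real) (\<sigma>::real) (Out::nat set).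
         0 < \<sigma> \<and> Out \<subseteq> {..<n} \<and> card Out \<le> k \<longrightarrow>
         (let M = huber_model n Out \<theta> \<eta> \<sigma>;
              E = {x \<in> space M. \<exists>m. is_sample_median n x m \<and>
                     \<bar>m - \<theta>\<bar> > C * \<sigma> * sqrt (ln (exp 1 * real n / (real n - 2 * real k)))}
          in E \<in> sets M \<and> measure M E \<le> \<delta>)))"
proof (intro exI[of _ "4::real"] conjI allI impI, goal_cases)
  case (2 \<delta>)
  show ?case
  proof (intro exI[of _ "nat \<lceil>1 / \<delta>\<rceil>"] allI impI, goal_cases)
    case (1 n k \<theta> \<eta> \<sigma> Out)
    then have "1 / real n \<le> \<delta>"
      using \<open>0 < \<delta> \<and> \<delta> < 1\<close> by (simp add: field_simps)
    have "0 < \<sigma>" "Out \<subseteq> {..<n}" "card Out \<le> k" "2 * k < n"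
      using 1 by simp_all
    from huber_model_median_deviation_le[OF this, of \<theta> \<eta>] \<open>1 / real n \<le> \<delta>\<close> show ?case
      by (auto simp: Let_def)
  qed
qed simp

end
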